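(* Let $G$ be a connected weighted multigraph on the vertex set $V$, $|V|=n\ge 2$, with positive edge weights, weighted adjacency matrix $A$ and spectral radius $\rho$. For $\alpha>0$ put $t=(\rho+\alpha^{-1})^{-1}\in(0,\rho^{-1})$, $R_t=(I-tA)^{-1}=(r_{ij}(t))$, and $$d^{W}_\alpha(i,j)=\theta\Bigl(\tfrac12\bigl(\ln r_{ii}(t)+\ln r_{jj}(t)\bigr)-\ln r_{ij}(t)\Bigr),\qquad \theta=\ln\bigl(e+\alpha^{2/n}\bigr)\frac{\alpha-1}{\ln\alpha}$$ (with $\theta=\ln(e+1)$ when $\alpha=1$). Then for all $i,j\in V$, $$\lim_{\alpha\to0^+}d^{W}_\alpha(i,j)=d^{s}(i,j),$$ where $d^s(i,j)$ is the shortest path distance, i.e. the minimum number of edges of a path between $i$ and $j$ in $G$.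
   Context: $G$ may have loops and multiple edges; $A=(a_{ij})$ has $a_{ij}$ equal to the sum of the weights of the edges joining $i$ and $j$. *)

theory Defs
  imports "Jordan_Normal_Form.Spectral_Radius"
begin

text \<open>A weighted multigraph on vertices {0..<n} is given by its weighted adjacency
  matrix A (entry (i,j) = sum of weights of edges joining i and j). With positive
  edge weights, i and j are adjacent iff A(i,j) > 0.\<close>

definition weighted_adjacency :: "nat \<Rightarrow> real mat \<Rightarrow> bool" where
  "weighted_adjacency n A \<longleftrightarrow> A \<in> carrier_mat n n \<and> A\<^sup>T = A \<and>
     (\<forall>i<n. \<forall>j<n. A $$ (i,j) \<ge> 0)"

definition has_walk :: "nat \<Rightarrow> real mat \<Rightarrow> nat \<Rightarrow> nat \<Rightarrow> nat \<Rightarrow> bool" where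
  "has_walk n A k i j \<longleftrightarrow> (\<exists>p :: nat \<Rightarrow> nat. p 0 = i \<and> p k = j \<and> (\<forall>m\<le>k. p m < n) \<and>
     (\<forall>m<k. A $$ (p m, p (Suc m)) > 0))"

definition graph_connected :: "nat \<Rightarrow> real mat \<Rightarrow> bool" where
  "graph_connected n A \<longleftrightarrow> (\<forall>i<n. \<forall>j<n. \<exists>k. has_walk n A k i j)"

definition sp_dist :: "nat \<Rightarrow> real mat \<Rightarrow> nat \<Rightarrow> nat \<Rightarrow> nat" where
  "sp_dist n A i j = (LEAST k. has_walk n A k i j)"

definition rho :: "real mat \<Rightarrow> real" where
  "rho A = spectral_radius (map_mat complex_of_real A)"

definition resolvent :: "nat \<Rightarrow> real mat \<Rightarrow> real \<Rightarrow> real mat" where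
  "resolvent n A t = (THE B. B \<in> carrier_mat n n \<and>
      (1\<^sub>m n - t \<cdot>\<^sub>m A) * B = 1\<^sub>m n \<and> B * (1\<^sub>m n - t \<cdot>\<^sub>m A) = 1\<^sub>m n)"

definition theta :: "nat \<Rightarrow> real \<Rightarrow> real" where
  "theta n \<alpha> = (if \<alpha> = 1 then ln (exp 1 + 1)
                 else ln (exp 1 + \<alpha> powr (2 / real n)) * (\<alpha> - 1) / ln \<alpha>)"

definition walk_dist :: "nat \<Rightarrow> real mat \<Rightarrow> real \<Rightarrow> nat \<Rightarrow> nat \<Rightarrow> real" where
  "walk_dist n A \<alpha> i j =
     (let t = inverse (rho A + inverse \<alpha>); R = resolvent n A t
      in theta n \<alpha> * ((ln (R $$ (i,i)) + ln (R $$ (j,j))) / 2 - ln (R $$ (i,j))))"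

end

theory Submission
  imports Defs "HOL-Real_Asymp.Real_Asymp"
begin

text \<open>For small t the resolvent is the Neumann series \<open>R\<^sub>t = \<Sum>\<^sub>k t\<^sup>k A\<^sup>k\<close>, and for a
  nonnegative A the entry \<open>(A\<^sup>k)\<^sub>i\<^sub>j\<close> is positive exactly when there is a walk of length k
  from i to j. Hence \<open>r\<^sub>i\<^sub>j(t)\<close> is of exact order \<open>t\<^sup>d\<close> with \<open>d = d\<^sup>s(i,j)\<close>, so
  \<open>ln r\<^sub>i\<^sub>j(t) = d ln t + O(1)\<close> as \<open>t \<rightarrow> 0\<close>, while \<open>ln r\<^sub>i\<^sub>i(t) = O(1)\<close>. As \<open>\<alpha> \<rightarrow> 0\<^sup>+\<close> we have
  \<open>t \<rightarrow> 0\<^sup>+\<close>, \<open>\<theta> \<rightarrow> 0\<close> and \<open>\<theta> ln t \<rightarrow> -1\<close>, so the bounded terms vanish and \<open>d\<^sup>W\<^sub>\<alpha>(i,j) \<rightarrow> d\<close>.\<close>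

lemma tendsto_zero_mult_Bfun:
  fixes f g :: "'a \<Rightarrow> real"
  assumes "(f \<longlongrightarrow> 0) F" and "Bfun g F"
  shows "((\<lambda>x. f x * g x) \<longlongrightarrow> 0) F"
  using bounded_bilinear.Zfun_prod_Bfun[OF bounded_bilinear_mult] assms
  by (simp add: tendsto_Zfun_iff)

lemma Bfun_compose_filterlim:
  fixes f :: "'b \<Rightarrow> 'c::real_normed_vector"
  assumes "Bfun f F" and "filterlim g F G"
  shows "Bfun (\<lambda>x. f (g x)) G"
proof -
  obtain B where "\<forall>\<^sub>F y in F. norm (f y) \<le> B" using BfunE[OF assms(1)] by blast
  from eventually_compose_filterlim[OF this assms(2)] show ?thesis by (rule BfunI)
qed

lemma power_series_bounds:
  fixes a :: "nat \<Rightarrow> real"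
  assumes nonneg: "\<And>k. 0 \<le> a k" and le: "\<And>k. a k \<le> K ^ k"
    and zero: "\<And>k. k < d \<Longrightarrow> a k = 0"
    and t: "0 < t" "t * K \<le> 1/2"
  shows "summable (\<lambda>k. t ^ k * a k)"
    and "t ^ d * a d \<le> (\<Sum>k. t ^ k * a k)"
    and "(\<Sum>k. t ^ k * a k) \<le> 2 * (2 * K) ^ d * t ^ d"
proof -
  have K: "0 \<le> K" using nonneg[of 1] le[of 1] by simp
  have term_le: "t ^ k * a k \<le> (t * K) ^ k" for k
    using le[of k] t(1) by (simp add: power_mult_distrib)
  have half: "(t * K) ^ k \<le> (1/2) ^ k" for k
    using t K by (intro power_mono) auto
  show sm: "summable (\<lambda>k. t ^ k * a k)"
    by (rule summable_comparison_test[of _ "\<lambda>k. (1/2::real) ^ k"])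
      (use term_le half nonneg t in \<open>auto intro!: exI[of _ 0] order.trans[OF _ half]\<close>)
  show "t ^ d * a d \<le> (\<Sum>k. t ^ k * a k)"
    using sum_le_suminf[OF sm, of "{d}"] nonneg t by auto
  let ?g = "\<lambda>k. (2 * K) ^ d * t ^ d * (1/2::real) ^ k"
  have "(\<Sum>k. t ^ k * a k) \<le> (\<Sum>k. ?g k)"
  proof (rule suminf_le[OF _ sm])
    show "t ^ k * a k \<le> ?g k" for k
    proof (cases "k < d")
      case False
      then obtain m where m: "k = d + m" using le_Suc_ex not_less by blast
      have "t ^ k * a k \<le> (t * K) ^ d * (t * K) ^ m" using term_le[of k] m by (simp add: power_add)
      also have "\<dots> \<le> (t * K) ^ d * (1/2) ^ m" using t K half by (intro mult_left_mono) auto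
      also have "\<dots> = ?g k" using m by (simp add: power_add power_mult_distrib field_simps)
      finally show ?thesis .
    qed (use zero t K in simp)
  qed (intro summable_mult summable_geometric, simp)
  also have "(\<Sum>k. ?g k) = 2 * (2 * K) ^ d * t ^ d"
    by (subst suminf_mult) (auto simp: suminf_geometric)
  finally show "(\<Sum>k. t ^ k * a k) \<le> 2 * (2 * K) ^ d * t ^ d" .
qed

lemma has_walk_0_iff: "has_walk n A 0 i j \<longleftrightarrow> i = j \<and> i < n"
  unfolding has_walk_def by auto

lemma has_walk_Suc_iff:
  assumes "j < n"
  shows "has_walk n A (Suc k) i j \<longleftrightarrow> (\<exists>l<n. has_walk n A k i l \<and> A $$ (l,j) > 0)"
proof
  assume "has_walk n A (Suc k) i j"
  then obtain p where p: "p 0 = i" "p (Suc k) = j" "\<forall>m\<le>Suc k. p m < n"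
    "\<forall>m<Suc k. A $$ (p m, p (Suc m)) > 0" unfolding has_walk_def by blast
  then have "has_walk n A k i (p k)" unfolding has_walk_def by (intro exI[of _ p]) auto
  with p show "\<exists>l<n. has_walk n A k i l \<and> A $$ (l,j) > 0" by (intro exI[of _ "p k"]) auto
next
  assume "\<exists>l<n. has_walk n A k i l \<and> A $$ (l,j) > 0"
  then obtain l p where "l < n" "A $$ (l,j) > 0" and p: "p 0 = i" "p k = l" "\<forall>m\<le>k. p m < n"
    "\<forall>m<k. A $$ (p m, p (Suc m)) > 0" unfolding has_walk_def by blast
  with assms show "has_walk n A (Suc k) i j" unfolding has_walk_def
    by (intro exI[of _ "p(Suc k := j)"]) (auto simp: le_Suc_eq less_Suc_eq)
qed

lemma sp_dist_self: "i < n \<Longrightarrow> sp_dist n A i i = 0"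
  unfolding sp_dist_def by (simp add: has_walk_0_iff)

lemma pow_mat_Suc_index:
  assumes "A \<in> carrier_mat n n" and "i < n" "j < n"
  shows "(A ^\<^sub>m Suc k) $$ (i,j) = (\<Sum>l<n. (A ^\<^sub>m k) $$ (i,l) * A $$ (l,j))"
  using assms by (simp add: scalar_prod_def lessThan_atLeast0 row_def col_def)

lemma resolvent_eqI:
  assumes A: "A \<in> carrier_mat n n" and B: "B \<in> carrier_mat n n"
    and inv: "B * (1\<^sub>m n - t \<cdot>\<^sub>m A) = 1\<^sub>m n"
  shows "resolvent n A t = B"
  unfolding resolvent_def
proof (rule the_equality)
  have I: "1\<^sub>m n - t \<cdot>\<^sub>m A \<in> carrier_mat n n" using A by auto
  have inv': "(1\<^sub>m n - t \<cdot>\<^sub>m A) * B = 1\<^sub>m n" by (rule mat_mult_left_right_inverse[OF B I inv])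
  then show "B \<in> carrier_mat n n \<and> (1\<^sub>m n - t \<cdot>\<^sub>m A) * B = 1\<^sub>m n \<and> B * (1\<^sub>m n - t \<cdot>\<^sub>m A) = 1\<^sub>m n"
    using B inv by simp
  fix B' assume B': "B' \<in> carrier_mat n n \<and> (1\<^sub>m n - t \<cdot>\<^sub>m A) * B' = 1\<^sub>m n \<and> B' * (1\<^sub>m n - t \<cdot>\<^sub>m A) = 1\<^sub>m n"
  then have "B' = B' * ((1\<^sub>m n - t \<cdot>\<^sub>m A) * B)" using inv' right_mult_one_mat[of B' n n] by simp
  also have "\<dots> = (B' * (1\<^sub>m n - t \<cdot>\<^sub>m A)) * B" using assoc_mult_mat[of B' n n "1\<^sub>m n - t \<cdot>\<^sub>m A" n B n] B' B I by simp
  also have "\<dots> = B" using B' B by simp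
  finally show "B' = B" .
qed

locale nonneg_mat =
  fixes n :: nat and A :: "real mat"
  assumes carrier: "A \<in> carrier_mat n n"
    and nonneg: "\<And>i j. i < n \<Longrightarrow> j < n \<Longrightarrow> 0 \<le> A $$ (i,j)"
begin

lemma pow_index_nonneg: "i < n \<Longrightarrow> j < n \<Longrightarrow> 0 \<le> (A ^\<^sub>m k) $$ (i,j)"
proof (induction k arbitrary: j)
  case (Suc k)
  then show ?case unfolding pow_mat_Suc_index[OF carrier Suc.prems]
    by (intro sum_nonneg mult_nonneg_nonneg) (auto intro: nonneg)
qed (use carrier in simp)

lemma pow_index_le:
  assumes "i < n" "j < n" and M: "\<And>i j. i < n \<Longrightarrow> j < n \<Longrightarrow> A $$ (i,j) \<le> M"
  shows "(A ^\<^sub>m k) $$ (i,j) \<le> (real n * M) ^ k"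
  using assms(1,2)
proof (induction k arbitrary: j)
  case (Suc k)
  have "0 \<le> M" using M[of 0 0] nonneg[of 0 0] Suc.prems by simp
  have "(\<Sum>l<n. (A ^\<^sub>m k) $$ (i,l) * A $$ (l,j)) \<le> (\<Sum>l<n. (real n * M) ^ k * M)"
    using Suc \<open>0 \<le> M\<close> by (intro sum_mono mult_mono) (auto intro: M nonneg pow_index_nonneg)
  then show ?case unfolding pow_mat_Suc_index[OF carrier Suc.prems] by (simp add: mult_ac)
qed (use carrier in simp)

lemma pow_index_pos_iff_has_walk:
  assumes "i < n" "j < n"
  shows "(A ^\<^sub>m k) $$ (i,j) > 0 \<longleftrightarrow> has_walk n A k i j"
  using assms(2)
proof (induction k arbitrary: j)
  case 0
  then show ?case using assms carrier by (simp add: has_walk_0_iff)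
next
  case (Suc k)
  define f where "f l = (A ^\<^sub>m k) $$ (i,l) * A $$ (l,j)" for l
  have "0 \<le> f l" if "l \<in> {..<n}" for l
    using assms Suc.prems that pow_index_nonneg nonneg by (simp add: f_def)
  then have "0 < sum f {..<n} \<longleftrightarrow> (\<exists>l\<in>{..<n}. f l \<noteq> 0)"
    using sum_nonneg_eq_0_iff[of "{..<n}" f] sum_nonneg[of "{..<n}" f] by (auto simp: less_le)
  also have "\<dots> \<longleftrightarrow> (\<exists>l\<in>{..<n}. has_walk n A k i l \<and> A $$ (l,j) > 0)"
  proof (intro bex_cong refl)
    fix l assume "l \<in> {..<n}"
    then have "0 \<le> (A ^\<^sub>m k) $$ (i,l)" "0 \<le> A $$ (l,j)" "(A ^\<^sub>m k) $$ (i,l) > 0 \<longleftrightarrow> has_walk n A k i l"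
      using assms Suc by (auto intro: pow_index_nonneg nonneg)
    then show "f l \<noteq> 0 \<longleftrightarrow> has_walk n A k i l \<and> A $$ (l,j) > 0"
      by (auto simp: f_def less_le)
  qed
  finally show ?case unfolding pow_mat_Suc_index[OF carrier assms(1) Suc.prems]
      has_walk_Suc_iff[OF Suc.prems] by (simp only: f_def[abs_def] lessThan_iff Bex_def)
qed

lemma pow_index_below_sp_dist:
  assumes "i < n" "j < n" "k < sp_dist n A i j"
  shows "(A ^\<^sub>m k) $$ (i,j) = 0"
proof -
  have "\<not> has_walk n A k i j"
    using not_less_Least[of k "\<lambda>k. has_walk n A k i j"] assms(3) unfolding sp_dist_def by blast
  then have "\<not> 0 < (A ^\<^sub>m k) $$ (i,j)" using pow_index_pos_iff_has_walk[OF assms(1,2)] by blast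
  with pow_index_nonneg[OF assms(1,2), of k] show ?thesis by linarith
qed

lemma pow_index_sp_dist_pos:
  assumes "i < n" "j < n" "has_walk n A k i j"
  shows "0 < (A ^\<^sub>m sp_dist n A i j) $$ (i,j)"
  using LeastI[of "\<lambda>k. has_walk n A k i j"] assms pow_index_pos_iff_has_walk
  by (simp add: sp_dist_def)

definition neumann_sum :: "real \<Rightarrow> real mat" where
  "neumann_sum t = mat n n (\<lambda>(i,j). \<Sum>k. t ^ k * (A ^\<^sub>m k) $$ (i,j))"

context
  fixes M t :: real
  assumes M: "\<And>i j. i < n \<Longrightarrow> j < n \<Longrightarrow> A $$ (i,j) \<le> M"
    and t: "0 < t" "t * (real n * M) \<le> 1/2"
begin

lemma summable_pow_index: "i < n \<Longrightarrow> j < n \<Longrightarrow> summable (\<lambda>k. t ^ k * (A ^\<^sub>m k) $$ (i,j))"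
  using power_series_bounds(1)[of "\<lambda>k. (A ^\<^sub>m k) $$ (i,j)"] pow_index_nonneg
    pow_index_le[OF _ _ M] t by blast

lemma neumann_sum_mult_index:
  assumes ij: "i < n" "j < n"
  shows "(neumann_sum t * A) $$ (i,j) = (\<Sum>k. t ^ k * (A ^\<^sub>m Suc k) $$ (i,j))"
proof -
  have "(neumann_sum t * A) $$ (i,j) = (\<Sum>l<n. \<Sum>k. t ^ k * (A ^\<^sub>m k) $$ (i,l) * A $$ (l,j))"
    using carrier ij by (simp add: scalar_prod_def lessThan_atLeast0 row_def col_def
        neumann_sum_def suminf_mult2[OF summable_pow_index])
  also have "\<dots> = (\<Sum>k. \<Sum>l<n. t ^ k * (A ^\<^sub>m k) $$ (i,l) * A $$ (l,j))"
    using ij by (intro suminf_sum[symmetric] summable_mult2 summable_pow_index) auto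
  also have "\<dots> = (\<Sum>k. t ^ k * (A ^\<^sub>m Suc k) $$ (i,j))"
    unfolding pow_mat_Suc_index[OF carrier ij] by (simp add: sum_distrib_left mult.assoc)
  finally show ?thesis .
qed

lemma neumann_sum_inverse: "neumann_sum t * (1\<^sub>m n - t \<cdot>\<^sub>m A) = 1\<^sub>m n"
proof -
  have B: "neumann_sum t \<in> carrier_mat n n" by (simp add: neumann_sum_def)
  have "neumann_sum t * (1\<^sub>m n - t \<cdot>\<^sub>m A) = neumann_sum t * 1\<^sub>m n - neumann_sum t * (t \<cdot>\<^sub>m A)"
    using carrier B by (intro mult_minus_distrib_mat) auto
  also have "\<dots> = neumann_sum t - t \<cdot>\<^sub>m (neumann_sum t * A)"
    using carrier B by (simp add: mult_smult_distrib)
  also have "\<dots> = 1\<^sub>m n"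
  proof (rule eq_matI)
    fix i j assume "i < dim_row (1\<^sub>m n :: real mat)" "j < dim_col (1\<^sub>m n :: real mat)"
    then have ij: "i < n" "j < n" by auto
    note sm = summable_pow_index[OF ij]
    \<comment> \<open>The shifted series is the Neumann series without its constant term \<open>A\<^sup>0 = 1\<^sub>m n\<close>.\<close>
    have "t * (\<Sum>k. t ^ k * (A ^\<^sub>m Suc k) $$ (i,j)) = (\<Sum>k. t ^ Suc k * (A ^\<^sub>m Suc k) $$ (i,j))"
      using summable_Suc_iff[THEN iffD2, OF sm] t(1)
      by (subst suminf_mult[symmetric]) (auto simp: mult.assoc simp del: pow_mat.simps
          dest: summable_mult[of _ "inverse t"])
    also have "\<dots> = (\<Sum>k. t ^ k * (A ^\<^sub>m k) $$ (i,j)) - (A ^\<^sub>m 0) $$ (i,j)"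
      using suminf_split_head[OF sm] by simp
    finally show "(neumann_sum t - t \<cdot>\<^sub>m (neumann_sum t * A)) $$ (i,j) = 1\<^sub>m n $$ (i,j)"
      using ij carrier B neumann_sum_mult_index[OF ij] by (simp add: neumann_sum_def)
  qed (use carrier B in auto)
  finally show ?thesis .
qed

lemma resolvent_eq_suminf:
  assumes "i < n" "j < n"
  shows "resolvent n A t $$ (i,j) = (\<Sum>k. t ^ k * (A ^\<^sub>m k) $$ (i,j))"
proof -
  have "resolvent n A t = neumann_sum t"
    by (rule resolvent_eqI[OF carrier _ neumann_sum_inverse]) (simp add: neumann_sum_def)
  with assms show ?thesis by (simp add: neumann_sum_def)
qed

end

lemma resolvent_index_power_bounds:
  assumes ij: "i < n" "j < n" and walk: "has_walk n A k i j"
  obtains c C where "0 < c" "0 < C"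
    "\<forall>\<^sub>F t in at_right 0. c * t ^ sp_dist n A i j \<le> resolvent n A t $$ (i,j) \<and>
                           resolvent n A t $$ (i,j) \<le> C * t ^ sp_dist n A i j"
proof -
  define d where "d = sp_dist n A i j"
  define M where "M = 1 + (\<Sum>p\<in>{..<n}\<times>{..<n}. A $$ p)"
  have M: "A $$ (a,b) \<le> M" if "a < n" "b < n" for a b
    using member_le_sum[of "(a,b)" "{..<n}\<times>{..<n}" "\<lambda>p. A $$ p"] that nonneg
    by (force simp: M_def)
  define K where "K = real n * M"
  have "1 \<le> M" unfolding M_def using nonneg by (auto intro!: sum_nonneg)
  then have "0 < K" using ij by (simp add: K_def)
  have small: "\<forall>\<^sub>F t in at_right 0. 0 < t \<and> t * K \<le> 1/2"
    using eventually_at_right_less[of 0] eventually_at_right_field[THEN iffD2,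
        OF exI[of _ "1 / (2 * K)"]] \<open>0 < K\<close>
    by (auto elim!: eventually_elim2 simp: field_simps)
  show ?thesis
  proof
    show "0 < (A ^\<^sub>m d) $$ (i,j)" unfolding d_def by (rule pow_index_sp_dist_pos[OF ij walk])
    show "0 < 2 * (2 * K) ^ d" using \<open>0 < K\<close> by simp
    show "\<forall>\<^sub>F t in at_right 0. (A ^\<^sub>m d) $$ (i,j) * t ^ sp_dist n A i j \<le> resolvent n A t $$ (i,j) \<and>
                          resolvent n A t $$ (i,j) \<le> 2 * (2 * K) ^ d * t ^ sp_dist n A i j"
      using small
    proof eventually_elim
      case (elim t)
      have "resolvent n A t $$ (i,j) = (\<Sum>k. t ^ k * (A ^\<^sub>m k) $$ (i,j))"
        using resolvent_eq_suminf[OF M _ _ ij] elim by (simp add: K_def)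
      then show ?case
        using power_series_bounds(2,3)[of "\<lambda>k. (A ^\<^sub>m k) $$ (i,j)" K d t] elim
          pow_index_nonneg[OF ij] pow_index_le[OF ij M] pow_index_below_sp_dist[OF ij]
        by (simp add: K_def d_def mult.commute)
    qed
  qed
qed

lemma Bfun_ln_resolvent_index:
  assumes "i < n" "j < n" "has_walk n A k i j"
  shows "Bfun (\<lambda>t. ln (resolvent n A t $$ (i,j)) - real (sp_dist n A i j) * ln t) (at_right 0)"
proof -
  obtain c C where c: "0 < c" "0 < C" and bounds:
    "\<forall>\<^sub>F t in at_right 0. c * t ^ sp_dist n A i j \<le> resolvent n A t $$ (i,j) \<and>
                         resolvent n A t $$ (i,j) \<le> C * t ^ sp_dist n A i j"
    using resolvent_index_power_bounds[OF assms] by blast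
  show ?thesis
  proof (rule BfunI)
    show "\<forall>\<^sub>F t in at_right 0. norm (ln (resolvent n A t $$ (i,j)) - real (sp_dist n A i j) * ln t)
                              \<le> max \<bar>ln c\<bar> \<bar>ln C\<bar>"
      using bounds eventually_at_right_less[of 0]
    proof eventually_elim
      case (elim t)
      have "0 < c * t ^ sp_dist n A i j" using c elim by simp
      with elim have "ln (c * t ^ sp_dist n A i j) \<le> ln (resolvent n A t $$ (i,j))"
        "ln (resolvent n A t $$ (i,j)) \<le> ln (C * t ^ sp_dist n A i j)"
        by (auto intro!: ln_mono)
      then show ?case using c elim by (simp add: ln_mult ln_realpow)
    qed
  qed
qed

end

lemma weighted_adjacency_nonneg_mat: "weighted_adjacency n A \<Longrightarrow> nonneg_mat n A"
  unfolding weighted_adjacency_def by unfold_locales auto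

lemma filterlim_resolvent_parameter:
  "filterlim (\<lambda>\<alpha>::real. inverse (r + inverse \<alpha>)) (at_right 0) (at_right 0)"
  by (rule tendsto_imp_filterlim_at_right) real_asymp+

lemma theta_eventually_eq:
  "\<forall>\<^sub>F \<alpha> in at_right 0. theta n \<alpha> = ln (exp 1 + \<alpha> powr (2 / real n)) * (\<alpha> - 1) / ln \<alpha>"
proof -
  have "\<forall>\<^sub>F \<alpha> in at_right 0. \<alpha> < (1::real)" by real_asymp
  then show ?thesis by eventually_elim (simp add: theta_def)
qed

lemma theta_tendsto_0:
  assumes "n > 0"
  shows "(theta n \<longlongrightarrow> 0) (at_right 0)"
proof (rule Lim_transform_eventually)
  show "((\<lambda>\<alpha>. ln (exp 1 + \<alpha> powr (2 / real n)) * (\<alpha> - 1) / ln \<alpha>) \<longlongrightarrow> 0) (at_right 0)"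
    using assms by real_asymp
  show "\<forall>\<^sub>F \<alpha> in at_right 0. ln (exp 1 + \<alpha> powr (2 / real n)) * (\<alpha> - 1) / ln \<alpha> = theta n \<alpha>"
    using theta_eventually_eq[of n] by eventually_elim (simp only:)
qed

lemma theta_mult_ln_resolvent_parameter:
  assumes "n > 0"
  shows "((\<lambda>\<alpha>. theta n \<alpha> * ln (inverse (r + inverse \<alpha>))) \<longlongrightarrow> -1) (at_right 0)"
proof (rule Lim_transform_eventually)
  show "((\<lambda>\<alpha>. ln (exp 1 + \<alpha> powr (2 / real n)) * (\<alpha> - 1) / ln \<alpha> * ln (inverse (r + inverse \<alpha>)))
         \<longlongrightarrow> -1) (at_right 0)"
    using assms by real_asymp
  show "\<forall>\<^sub>F \<alpha> in at_right 0. ln (exp 1 + \<alpha> powr (2 / real n)) * (\<alpha> - 1) / ln \<alpha> *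
          ln (inverse (r + inverse \<alpha>)) = theta n \<alpha> * ln (inverse (r + inverse \<alpha>))"
    using theta_eventually_eq[of n] by eventually_elim (simp only:)
qed

theorem theorem3:
  fixes n :: nat and A :: "real mat" and i j :: nat
  assumes "n \<ge> 2"
    and "weighted_adjacency n A"
    and "graph_connected n A"
    and "i < n" and "j < n"
  shows "((\<lambda>\<alpha>. walk_dist n A \<alpha> i j) \<longlongrightarrow> real (sp_dist n A i j)) (at_right 0)"
proof -
  interpret nonneg_mat n A using assms(2) by (rule weighted_adjacency_nonneg_mat)
  define \<tau> where "\<tau> \<alpha> = inverse (rho A + inverse \<alpha>)" for \<alpha> :: real
  define h where "h x y t = ln (resolvent n A t $$ (x,y)) - real (sp_dist n A x y) * ln t" for x y t
  have theta_h: "((\<lambda>\<alpha>. theta n \<alpha> * h x y (\<tau> \<alpha>)) \<longlongrightarrow> 0) (at_right 0)" if xy: "x < n" "y < n" for x y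
  proof -
    obtain k where "has_walk n A k x y" using assms(3) xy unfolding graph_connected_def by blast
    from Bfun_ln_resolvent_index[OF xy this] have "Bfun (\<lambda>\<alpha>. h x y (\<tau> \<alpha>)) (at_right 0)"
      unfolding h_def \<tau>_def by (rule Bfun_compose_filterlim[OF _ filterlim_resolvent_parameter])
    with assms(1) show ?thesis by (intro tendsto_zero_mult_Bfun theta_tendsto_0) auto
  qed
  have walk_dist_eq: "(\<lambda>\<alpha>. walk_dist n A \<alpha> i j) = (\<lambda>\<alpha>. theta n \<alpha> * h i i (\<tau> \<alpha>) / 2
      + theta n \<alpha> * h j j (\<tau> \<alpha>) / 2 - theta n \<alpha> * h i j (\<tau> \<alpha>)
      - real (sp_dist n A i j) * (theta n \<alpha> * ln (\<tau> \<alpha>)))"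
    unfolding walk_dist_def Let_def h_def \<tau>_def sp_dist_self[OF assms(4)] sp_dist_self[OF assms(5)]
    by (simp add: algebra_simps add_divide_distrib)
  have theta_ln_\<tau>: "((\<lambda>\<alpha>. theta n \<alpha> * ln (\<tau> \<alpha>)) \<longlongrightarrow> -1) (at_right 0)"
    using assms(1) unfolding \<tau>_def by (intro theta_mult_ln_resolvent_parameter) auto
  have "((\<lambda>\<alpha>. theta n \<alpha> * h i i (\<tau> \<alpha>) / 2 + theta n \<alpha> * h j j (\<tau> \<alpha>) / 2
      - theta n \<alpha> * h i j (\<tau> \<alpha>) - real (sp_dist n A i j) * (theta n \<alpha> * ln (\<tau> \<alpha>)))
      \<longlongrightarrow> 0 + 0 - 0 - real (sp_dist n A i j) * -1) (at_right 0)"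
    by (intro tendsto_diff tendsto_add tendsto_divide_zero tendsto_mult_left theta_h theta_ln_\<tau> assms(4,5))
  then show ?thesis unfolding walk_dist_eq by simp
qed

end
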